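(* Let $n\ge1$ and let $G$ be a canonical weighted voting game on players $\{1,\dots,n\}$ whose set $W_{\min,G}$ of minimal winning coalitions is nonempty. Then there exist a coalition $C\in W_{\min,G}$ and a canonical weighted voting game $G'$ on players $\{1,\dots,n\}$ whose set of minimal winning coalitions is exactly $W_{\min,G}\setminus\{C\}$.
   Context: A simple game on $N=\{1,\dots,n\}$ is a function $v:2^N\to\{0,1\}$ (the all-losing game is allowed); $S$ is winning if $v(S)=1$. A minimal winning coalition is a winning coalition all of whose sets $S\setminus\{i\}$, $i\in S$, are losing. A weighted voting game is a simple game for which there exist $q\ge0$, $w_1,\dots,w_n\ge0$ with $v(S)=1\iff\sum_{i\in S}w_i\ge q$. Write $i\succeq j$ if $v(S\cup\{i\})\ge v(S\cup\{j\})$ for all $S\subseteq N\setminus\{i,j\}$. A canonical weighted voting game is a weighted voting game with $1\succeq2\succeq\cdots\succeq n$. *)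

theory Defs
  imports Complex_Main
begin

text \<open>A simple game on players N = {1..n} is represented by v :: nat set => bool;
  only its values on subsets of {1..n} matter. S is winning iff v S.\<close>

definition weighted_voting_game :: "nat \<Rightarrow> (nat set \<Rightarrow> bool) \<Rightarrow> bool" where
  "weighted_voting_game n v \<longleftrightarrow>
     (\<exists>(q::real) (w::nat \<Rightarrow> real). q \<ge> 0 \<and> (\<forall>i\<in>{1..n}. w i \<ge> 0) \<and>
        (\<forall>S. S \<subseteq> {1..n} \<longrightarrow> (v S \<longleftrightarrow> (\<Sum>i\<in>S. w i) \<ge> q)))"

definition desirable :: "nat \<Rightarrow> (nat set \<Rightarrow> bool) \<Rightarrow> nat \<Rightarrow> nat \<Rightarrow> bool" where
  "desirable n v i j \<longleftrightarrow>
     (\<forall>S. S \<subseteq> {1..n} - {i, j} \<longrightarrow> (v (S \<union> {j}) \<longrightarrow> v (S \<union> {i})))"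

definition canonical_wvg :: "nat \<Rightarrow> (nat set \<Rightarrow> bool) \<Rightarrow> bool" where
  "canonical_wvg n v \<longleftrightarrow> weighted_voting_game n v \<and>
     (\<forall>i. 1 \<le> i \<and> i < n \<longrightarrow> desirable n v i (Suc i))"

definition min_winning :: "nat \<Rightarrow> (nat set \<Rightarrow> bool) \<Rightarrow> nat set set" where
  "min_winning n v = {S. S \<subseteq> {1..n} \<and> v S \<and> (\<forall>i\<in>S. \<not> v (S - {i}))}"

end

theory Submission
  imports Defs "HOL-Combinatorics.Permutations" "HOL-Library.Product_Lexorder"
begin

(* Choose nonnegative weights that are non-increasing in the player index: among all permutations
   of a representing weight vector, one minimising the sum of k * w k is sorted, since swapping an
   out-of-order adjacent pair i, i+1 leaves the game unchanged (by i >= i+1) and lowers that sum.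
   Let p be the largest player occurring in a minimal winning coalition and C a lightest minimal
   winning coalition containing p, with the largest index sum among the lightest ones. Making the
   players after p dummies, raising the weights of the players up to p outside C by a small e, and
   lowering the weight of p until C falls e/2 short of the quota, turns exactly the coalitions that
   meet {..p} in C into losing ones. Minimal winning coalitions all lie in {..p}, so only C is lost;
   and the extremal choice of C is what keeps the new game canonical: shifting a player i of C to
   i+1 would give a minimal winning coalition through p that is at most as light but has a larger
   index sum. *)

definition weighted_rep :: "nat \<Rightarrow> (nat set \<Rightarrow> bool) \<Rightarrow> (nat \<Rightarrow> real) \<Rightarrow> real \<Rightarrow> bool" where
  "weighted_rep n v u q \<longleftrightarrow> (\<forall>S \<subseteq> {1..n}. v S \<longleftrightarrow> q \<le> sum u S)"

lemma winning_contains_min_winning: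
  assumes "S \<subseteq> {1..n}" "v S"
  shows "\<exists>T\<in>min_winning n v. T \<subseteq> S"
  using assms
proof (induction "card S" arbitrary: S rule: less_induct)
  case less
  show ?case
  proof (cases "\<forall>i\<in>S. \<not> v (S - {i})")
    case True
    with less.prems show ?thesis unfolding min_winning_def by auto
  next
    case False
    then obtain i where i: "i \<in> S" "v (S - {i})" by auto
    have "finite S" using less.prems finite_subset by blast
    with i have "card (S - {i}) < card S" by (meson card_Diff1_less)
    with less i show ?thesis by blast
  qed
qed

lemma min_winning_shift:
  assumes des: "desirable n v i (Suc i)" and C: "C \<in> min_winning n v"
    and "i \<in> C" "Suc i \<notin> C" "Suc i \<le> n"
    and win: "v (insert (Suc i) (C - {i}))"
  shows "insert (Suc i) (C - {i}) \<in> min_winning n v"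
proof -
  have CN: "C \<subseteq> {1..n}" and C_loss: "\<And>k. k \<in> C \<Longrightarrow> \<not> v (C - {k})"
    using C unfolding min_winning_def by auto
  have "\<not> v (insert (Suc i) (C - {i}) - {k})" if "k \<in> insert (Suc i) (C - {i})" for k
  proof (cases "k = Suc i")
    case True
    with \<open>Suc i \<notin> C\<close> \<open>i \<in> C\<close> C_loss show ?thesis by auto
  next
    case False
    with that have k: "k \<in> C" "k \<noteq> i" by auto
    have "insert (Suc i) (C - {i}) - {k} = (C - {i, k}) \<union> {Suc i}" using False by auto
    moreover have "C - {i, k} \<subseteq> {1..n} - {i, Suc i}" using CN \<open>Suc i \<notin> C\<close> by auto
    moreover have "(C - {i, k}) \<union> {i} = C - {k}" using \<open>i \<in> C\<close> k by auto
    ultimately show ?thesis using des C_loss[OF k(1)] unfolding desirable_def by metis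
  qed
  moreover have "insert (Suc i) (C - {i}) \<subseteq> {1..n}" using CN \<open>Suc i \<le> n\<close> by auto
  ultimately show ?thesis using win unfolding min_winning_def by auto
qed

lemma sum_index_weighted_transpose:
  fixes f :: "nat \<Rightarrow> real"
  assumes "finite N" "i \<in> N" "Suc i \<in> N"
  shows "(\<Sum>k\<in>N. real k * f (transpose i (Suc i) k)) = (\<Sum>k\<in>N. real k * f k) + f i - f (Suc i)"
proof -
  have N: "N = insert i (insert (Suc i) (N - {i, Suc i}))" using assms by auto
  have "(\<Sum>k\<in>N - {i, Suc i}. real k * f (transpose i (Suc i) k)) = (\<Sum>k\<in>N - {i, Suc i}. real k * f k)"
    by (rule sum.cong) auto
  then show ?thesis using assms(1) by (subst (1 2) N) (simp add: algebra_simps)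
qed

context
  fixes n :: nat and v :: "nat set \<Rightarrow> bool" and u :: "nat \<Rightarrow> real" and q :: real and i :: nat
  assumes rep: "weighted_rep n v u q" and des: "desirable n v i (Suc i)"
    and i: "1 \<le> i" "Suc i \<le> n" and lt: "u i < u (Suc i)"
begin

text \<open>Desirability gives \<open>i \<succeq> i + 1\<close> and the weights give the converse, so the two players
  are interchangeable.\<close>

lemma winning_insert_adjacent_iff:
  assumes B: "B \<subseteq> {1..n} - {i, Suc i}"
  shows "v (insert (Suc i) B) \<longleftrightarrow> v (insert i B)"
proof
  show "v (insert (Suc i) B) \<Longrightarrow> v (insert i B)" using des B unfolding desirable_def by simp
next
  have "finite B" "i \<notin> B" "Suc i \<notin> B" using B finite_subset by auto
  then have "sum u (insert i B) < sum u (insert (Suc i) B)" using lt by simp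
  moreover have "insert i B \<subseteq> {1..n}" "insert (Suc i) B \<subseteq> {1..n}" using B i by auto
  moreover assume "v (insert i B)"
  ultimately show "v (insert (Suc i) B)" using rep unfolding weighted_rep_def by force
qed

lemma winning_transpose_image_iff:
  assumes S: "S \<subseteq> {1..n}"
  shows "v (transpose i (Suc i) ` S) \<longleftrightarrow> v S"
proof -
  define B where "B = S - {i, Suc i}"
  have B: "B \<subseteq> {1..n} - {i, Suc i}" and tB: "transpose i (Suc i) ` B = B"
    using S by (auto simp: B_def)
  consider "i \<in> S \<longleftrightarrow> Suc i \<in> S" | "i \<in> S" "Suc i \<notin> S" | "Suc i \<in> S" "i \<notin> S" by blast
  then show ?thesis
  proof cases
    case 2
    then have "S = insert i B" by (auto simp: B_def)
    with tB winning_insert_adjacent_iff[OF B] show ?thesis by simp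
  next
    case 3
    then have "S = insert (Suc i) B" by (auto simp: B_def)
    with tB winning_insert_adjacent_iff[OF B] show ?thesis by simp
  qed simp
qed

lemma weighted_rep_transpose: "weighted_rep n v (u \<circ> transpose i (Suc i)) q"
  unfolding weighted_rep_def
proof (intro allI impI)
  let ?t = "transpose i (Suc i)"
  fix S assume S: "S \<subseteq> {1..n}"
  have "?t permutes {1..n}" using i by (intro permutes_swap_id) auto
  then have "?t ` S \<subseteq> {1..n}" using S by (metis image_mono permutes_image)
  then have "v S \<longleftrightarrow> q \<le> sum u (?t ` S)"
    using winning_transpose_image_iff[OF S] rep unfolding weighted_rep_def by blast
  also have "sum u (?t ` S) = sum (u \<circ> ?t) S" by (simp add: sum.reindex)
  finally show "v S \<longleftrightarrow> q \<le> sum (u \<circ> ?t) S" .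
qed

end

locale sorted_weighted_game =
  fixes n :: nat and v :: "nat set \<Rightarrow> bool" and u :: "nat \<Rightarrow> real" and q :: real
  assumes rep: "weighted_rep n v u q"
    and quota_nonneg: "0 \<le> q"
    and weight_nonneg: "\<And>i. i \<in> {1..n} \<Longrightarrow> 0 \<le> u i"
    and weight_sorted: "\<And>i. 1 \<le> i \<Longrightarrow> i < n \<Longrightarrow> u (Suc i) \<le> u i"
    and canonical: "\<And>i. 1 \<le> i \<Longrightarrow> i < n \<Longrightarrow> desirable n v i (Suc i)"

lemma canonical_wvg_sorted_weights:
  assumes "canonical_wvg n v"
  shows "\<exists>u q. sorted_weighted_game n v u q"
proof -
  obtain q w where q: "0 \<le> q" and w: "\<forall>i\<in>{1..n}. 0 \<le> w i" and rep: "weighted_rep n v w q"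
    using assms unfolding canonical_wvg_def weighted_voting_game_def weighted_rep_def by blast
  have des: "\<And>i. 1 \<le> i \<Longrightarrow> i < n \<Longrightarrow> desirable n v i (Suc i)"
    using assms unfolding canonical_wvg_def by blast
  define P where "P = {\<pi>. \<pi> permutes {1..n} \<and> weighted_rep n v (w \<circ> \<pi>) q}"
  define cost where "cost \<pi> = (\<Sum>k\<in>{1..n}. real k * w (\<pi> k))" for \<pi> :: "nat \<Rightarrow> nat"
  define \<pi> where "\<pi> = arg_min_on cost P"
  have "P \<noteq> {}" using rep by (auto simp: P_def intro!: exI[of _ id])
  have "finite P"
    unfolding P_def by (rule finite_subset[OF _ finite_permutations[of "{1..n}"]]) auto
  have "\<pi> \<in> P" using \<open>finite P\<close> \<open>P \<noteq> {}\<close> unfolding \<pi>_def by (rule arg_min_if_finite(1))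
  have \<pi>_least: "cost \<pi> \<le> cost \<sigma>" if "\<sigma> \<in> P" for \<sigma>
    using \<open>finite P\<close> \<open>P \<noteq> {}\<close> that unfolding \<pi>_def by (rule arg_min_least)
  from \<open>\<pi> \<in> P\<close> have perm: "\<pi> permutes {1..n}" and rep\<pi>: "weighted_rep n v (w \<circ> \<pi>) q"
    by (auto simp: P_def)
  have "w (\<pi> (Suc i)) \<le> w (\<pi> i)" if i: "1 \<le> i" "i < n" for i
  proof (rule ccontr)
    let ?t = "transpose i (Suc i)"
    assume "\<not> w (\<pi> (Suc i)) \<le> w (\<pi> i)"
    then have lt: "(w \<circ> \<pi>) i < (w \<circ> \<pi>) (Suc i)" by simp
    have "weighted_rep n v (w \<circ> (\<pi> \<circ> ?t)) q"
      using weighted_rep_transpose[OF rep\<pi> des[OF i] _ _ lt] i by (simp add: comp_def)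
    moreover have "\<pi> \<circ> ?t permutes {1..n}" using perm i by (intro permutes_compose permutes_swap_id) auto
    ultimately have "cost \<pi> \<le> cost (\<pi> \<circ> ?t)" by (intro \<pi>_least) (simp add: P_def)
    moreover have "cost (\<pi> \<circ> ?t) = cost \<pi> + w (\<pi> i) - w (\<pi> (Suc i))"
      using sum_index_weighted_transpose[of "{1..n}" i "w \<circ> \<pi>"] i by (simp add: cost_def)
    ultimately show False using lt by simp
  qed
  moreover have "\<And>i. i \<in> {1..n} \<Longrightarrow> 0 \<le> (w \<circ> \<pi>) i" using w permutes_in_image[OF perm] by (metis comp_apply)
  ultimately have "sorted_weighted_game n v (w \<circ> \<pi>) q"
    using rep\<pi> q des by unfold_locales simp_all
  then show ?thesis by blast
qed

context sorted_weighted_game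
begin

lemma winning_iff: "S \<subseteq> {1..n} \<Longrightarrow> v S \<longleftrightarrow> q \<le> sum u S"
  using rep unfolding weighted_rep_def by blast

lemma winning_mono:
  assumes "v S" "S \<subseteq> T" "T \<subseteq> {1..n}"
  shows "v T"
proof -
  have "finite T" using assms(3) finite_subset by blast
  then have "sum u S \<le> sum u T" using assms weight_nonneg by (intro sum_mono2) auto
  moreover have "S \<subseteq> {1..n}" using assms by blast
  ultimately show ?thesis using assms winning_iff[of S] winning_iff[of T] by auto
qed

lemma weight_antimono:
  assumes "1 \<le> i" "i \<le> j" "j \<le> n"
  shows "u j \<le> u i"
  using assms(2,3)
proof (induction rule: dec_induct)
  case (step k)
  with weight_sorted[of k] assms(1) show ?case by simp
qed simp

lemma min_winning_proper_subset_losing: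
  assumes "C \<in> min_winning n v" "R \<subset> C"
  shows "\<not> v R"
proof
  assume "v R"
  obtain i where "i \<in> C" "R \<subseteq> C - {i}" using assms(2) by blast
  moreover have "C \<subseteq> {1..n}" using assms(1) by (simp add: min_winning_def)
  ultimately have "v (C - {i})" using winning_mono[OF \<open>v R\<close>] by blast
  with \<open>i \<in> C\<close> assms(1) show False by (simp add: min_winning_def)
qed

lemma min_winning_if_empty_winning:
  assumes "v {}"
  shows "min_winning n v = {{}}"
proof -
  have "S = {}" if "S \<in> min_winning n v" for S
    using min_winning_proper_subset_losing[OF that] assms by blast
  moreover have "{} \<in> min_winning n v" using assms by (simp add: min_winning_def)
  ultimately show ?thesis by blast
qed

lemma losing_margin: "\<exists>\<epsilon>::real>0. \<forall>S \<subseteq> {1..n}. \<not> v S \<longrightarrow> sum u S + \<epsilon> * n < q"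
proof -
  define L where "L = {S. S \<subseteq> {1..n} \<and> \<not> v S}"
  define \<gamma> where "\<gamma> = Min (insert 1 ((\<lambda>S. q - sum u S) ` L))"
  have "finite L" by (simp add: L_def)
  then have \<gamma>_le: "\<gamma> \<le> q - sum u S" if "S \<in> L" for S
    using that by (simp add: \<gamma>_def)
  have "0 < \<gamma>" using \<open>finite L\<close> winning_iff by (auto simp: \<gamma>_def L_def)
  then have "\<gamma> / (n + 1) > 0" "\<gamma> / (n + 1) * n < \<gamma>" by (simp_all add: field_simps)
  moreover have "sum u S + \<gamma> / (n + 1) * n < q" if "S \<subseteq> {1..n}" "\<not> v S" for S
  proof -
    have "\<gamma> \<le> q - sum u S" using \<gamma>_le that by (simp add: L_def)
    with \<open>\<gamma> / (n + 1) * n < \<gamma>\<close> show ?thesis by linarith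
  qed
  ultimately show ?thesis by blast
qed

end

locale coalition_removal = sorted_weighted_game +
  fixes p :: nat and C :: "nat set" and \<epsilon> :: real
  assumes C_min_winning: "C \<in> min_winning n v"
    and p_in_C: "p \<in> C"
    and min_winning_le_p: "\<And>T x. T \<in> min_winning n v \<Longrightarrow> x \<in> T \<Longrightarrow> x \<le> p"
    and C_lightest: "\<And>T. T \<in> min_winning n v \<Longrightarrow> p \<in> T \<Longrightarrow> sum u C \<le> sum u T"
    and C_last: "\<And>T. T \<in> min_winning n v \<Longrightarrow> p \<in> T \<Longrightarrow> sum u T = sum u C \<Longrightarrow> \<Sum>T \<le> \<Sum>C"
    and margin_pos: "0 < \<epsilon>"
    and losing_below_quota: "\<And>S. S \<subseteq> {1..n} \<Longrightarrow> \<not> v S \<Longrightarrow> sum u S + \<epsilon> * n < q"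
begin

definition penalty :: real where
  "penalty = sum u C - q + \<epsilon> / 2"

definition reduced_weight :: "nat \<Rightarrow> real" where
  "reduced_weight k =
     (if k \<le> p then u k + (if k \<in> C then 0 else \<epsilon>) - (if k = p then penalty else 0) else 0)"

definition reduced_game :: "nat set \<Rightarrow> bool" where
  "reduced_game S \<longleftrightarrow> q \<le> sum reduced_weight S"

lemma C_subset: "C \<subseteq> {1..n}"
  and C_winning: "v C"
  and C_minus_losing: "i \<in> C \<Longrightarrow> \<not> v (C - {i})"
  using C_min_winning by (auto simp: min_winning_def)

lemma finite_C: "finite C"
  using C_subset finite_subset by blast

lemma C_le_p: "C \<subseteq> {..p}"
  using C_min_winning min_winning_le_p by auto

lemma winning_below_p:
  assumes "S \<subseteq> {1..n}" "v S"
  shows "v (S \<inter> {..p})"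
proof -
  obtain T where "T \<in> min_winning n v" "T \<subseteq> S"
    using winning_contains_min_winning[of S n v] assms by blast
  moreover from this have "v T" "T \<subseteq> S \<inter> {..p}" using min_winning_le_p by (auto simp: min_winning_def)
  ultimately show ?thesis using winning_mono assms(1) by blast
qed

lemma penalty_pos: "0 < penalty"
  using winning_iff C_subset C_winning margin_pos unfolding penalty_def by force

lemma penalty_le: "penalty \<le> u p"
proof -
  have "sum u (C - {p}) + \<epsilon> * n < q"
    using losing_below_quota C_subset C_minus_losing[OF p_in_C] by blast
  moreover have "sum u C = u p + sum u (C - {p})" using finite_C p_in_C by (simp add: sum.remove)
  moreover have "1 \<le> n" using p_in_C C_subset by auto
  then have "\<epsilon> / 2 \<le> \<epsilon> * n" using margin_pos by simp
  ultimately show ?thesis by (simp add: penalty_def)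
qed

lemma reduced_weight_nonneg: "k \<in> {1..n} \<Longrightarrow> 0 \<le> reduced_weight k"
  using weight_nonneg[of k] penalty_le margin_pos by (simp add: reduced_weight_def)

lemma sum_reduced_weight:
  assumes "S \<subseteq> {1..n}"
  shows "sum reduced_weight S
    = sum u (S \<inter> {..p}) + \<epsilon> * card (S \<inter> {..p} - C) - (if p \<in> S then penalty else 0)"
proof -
  have "finite S" using assms finite_subset by blast
  then have "sum reduced_weight S
      = (\<Sum>k\<in>S \<inter> {..p}. u k + (if k \<in> C then 0 else \<epsilon>) - (if k = p then penalty else 0))"
    unfolding reduced_weight_def by (simp add: sum.inter_restrict)
  also have "\<dots> = sum u (S \<inter> {..p}) + \<epsilon> * card (S \<inter> {..p} - C) - (if p \<in> S then penalty else 0)"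
    using \<open>finite S\<close> by (simp add: sum.distrib sum_subtractf sum.If_cases Diff_eq)
  finally show ?thesis .
qed

lemma sum_C_le_of_p_pivotal:
  assumes R: "R \<subseteq> {1..n}" "v R" and p: "p \<in> R" "\<not> v (R - {p})"
  shows "sum u C \<le> sum u R"
proof -
  obtain T where T: "T \<in> min_winning n v" "T \<subseteq> R"
    using winning_contains_min_winning[of R n v] R by blast
  then have "v T" by (simp add: min_winning_def)
  have "p \<in> T"
  proof (rule ccontr)
    assume "p \<notin> T"
    with T have "T \<subseteq> R - {p}" by blast
    with \<open>v T\<close> R p show False using winning_mono by blast
  qed
  have "finite R" using R finite_subset by blast
  then have "sum u T \<le> sum u R" using T R weight_nonneg by (intro sum_mono2) auto
  with C_lightest[OF T(1) \<open>p \<in> T\<close>] show ?thesis by simp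
qed

lemma reduced_game_imp_winning:
  assumes S: "S \<subseteq> {1..n}" and red: "reduced_game S"
  shows "v S \<and> S \<inter> {..p} \<noteq> C"
proof -
  let ?R = "S \<inter> {..p}"
  have R: "?R \<subseteq> {1..n}" using S by blast
  have "card (?R - C) \<le> n" using card_mono[of "{1..n}" "?R - C"] R by auto
  then have "\<epsilon> * card (?R - C) \<le> \<epsilon> * n" using margin_pos by simp
  then have "q \<le> sum u ?R + \<epsilon> * n" using red sum_reduced_weight[OF S] penalty_pos
    by (auto simp: reduced_game_def split: if_splits)
  then have "v ?R" using losing_below_quota[OF R] by force
  moreover have "?R \<noteq> C"
  proof
    assume "?R = C"
    moreover from this have "p \<in> S" using p_in_C by blast
    ultimately have "sum reduced_weight S = q - \<epsilon> / 2"
      using sum_reduced_weight[OF S] by (simp add: penalty_def)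
    with red margin_pos show False by (simp add: reduced_game_def)
  qed
  ultimately show ?thesis using winning_mono S by blast
qed

lemma winning_imp_reduced_game:
  assumes S: "S \<subseteq> {1..n}" "v S" "S \<inter> {..p} \<noteq> C"
  shows "reduced_game S"
proof -
  define R where "R = S \<inter> {..p}"
  have R: "R \<subseteq> {1..n}" "finite R" and "v R" "R \<noteq> C"
    using S winning_below_p finite_subset by (auto simp: R_def)
  have weight: "sum reduced_weight S = sum u R + \<epsilon> * card (R - C) - (if p \<in> R then penalty else 0)"
    using sum_reduced_weight[OF S(1)] by (simp add: R_def)
  have extra: "0 \<le> \<epsilon> * card (R - C)" using margin_pos by simp
  consider "p \<notin> R" | "p \<in> R" "v (R - {p})" | "p \<in> R" "\<not> v (R - {p})" by blast
  then show "reduced_game S"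
  proof cases
    case 1
    then show ?thesis using weight extra winning_iff R \<open>v R\<close> by (simp add: reduced_game_def)
  next
    case 2
    then have "q \<le> sum u (R - {p})" using winning_iff R by blast
    moreover have "sum u R = u p + sum u (R - {p})" using R(2) 2 by (simp add: sum.remove)
    ultimately show ?thesis using weight extra penalty_le 2 by (simp add: reduced_game_def)
  next
    case 3
    have "\<not> R \<subset> C" using min_winning_proper_subset_losing C_min_winning \<open>v R\<close> by blast
    with \<open>R \<noteq> C\<close> have "R - C \<noteq> {}" by blast
    then have "1 \<le> card (R - C)" using R(2) by (simp add: Suc_le_eq card_gt_0_iff)
    then have "\<epsilon> \<le> \<epsilon> * card (R - C)" using margin_pos by simp
    moreover have "sum u C \<le> sum u R" using sum_C_le_of_p_pivotal R \<open>v R\<close> 3 by blast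
    moreover have "sum reduced_weight S = sum u R + \<epsilon> * card (R - C) - penalty" using weight 3 by simp
    ultimately show ?thesis using margin_pos unfolding reduced_game_def penalty_def by linarith
  qed
qed

lemma reduced_game_iff: "S \<subseteq> {1..n} \<Longrightarrow> reduced_game S \<longleftrightarrow> v S \<and> S \<inter> {..p} \<noteq> C"
  using reduced_game_imp_winning winning_imp_reduced_game by blast

lemma C_shift_losing:
  assumes i: "i \<in> C" "i < n"
  shows "\<not> v (insert (Suc i) (C - {i}) \<inter> {..p})"
proof
  let ?C' = "insert (Suc i) (C - {i})"
  assume win: "v (?C' \<inter> {..p})"
  have "i \<le> p" using i C_le_p by auto
  show False
  proof (cases "i = p")
    case True
    then have "?C' \<inter> {..p} = C - {p}" using C_le_p by auto
    with win C_minus_losing[OF p_in_C] show False by simp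
  next
    case False
    with \<open>i \<le> p\<close> have "?C' \<inter> {..p} = ?C'" using C_le_p by auto
    with win have "v ?C'" by simp
    show False
    proof (cases "Suc i \<in> C")
      case True
      then have "?C' = C - {i}" by auto
      with \<open>v ?C'\<close> C_minus_losing i show False by simp
    next
      case False
      have "1 \<le> i" using i C_subset by auto
      then have "?C' \<in> min_winning n v"
        using min_winning_shift[OF canonical C_min_winning] i False \<open>v ?C'\<close> by simp
      moreover have "p \<in> ?C'" using p_in_C \<open>i \<noteq> p\<close> by simp
      moreover have "sum u ?C' \<le> sum u C"
        using weight_sorted[OF \<open>1 \<le> i\<close> \<open>i < n\<close>] finite_C i False by (simp add: sum.remove)
      ultimately have "sum u ?C' = sum u C" using C_lightest by (meson antisym)
      then have "\<Sum>?C' \<le> \<Sum>C" using C_last \<open>?C' \<in> min_winning n v\<close> \<open>p \<in> ?C'\<close> by blast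
      moreover have "\<Sum>?C' = Suc i + \<Sum>(C - {i})" using finite_C False by simp
      moreover have "\<Sum>C = i + \<Sum>(C - {i})" using finite_C i by (simp add: sum.remove)
      ultimately show False by simp
    qed
  qed
qed

lemma reduced_game_canonical: "canonical_wvg n reduced_game"
proof -
  have "weighted_voting_game n reduced_game"
    unfolding weighted_voting_game_def reduced_game_def
    using quota_nonneg reduced_weight_nonneg by blast
  moreover have "desirable n reduced_game i (Suc i)" if i: "1 \<le> i" "i < n" for i
    unfolding desirable_def
  proof (intro allI impI)
    fix S assume S: "S \<subseteq> {1..n} - {i, Suc i}" and red: "reduced_game (S \<union> {Suc i})"
    have SN: "S \<union> {Suc i} \<subseteq> {1..n}" "S \<union> {i} \<subseteq> {1..n}" using S i by auto
    then have win: "v (S \<union> {Suc i})" and ne: "(S \<union> {Suc i}) \<inter> {..p} \<noteq> C"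
      using red reduced_game_iff by auto
    have "(S \<union> {i}) \<inter> {..p} \<noteq> C"
    proof
      assume eq: "(S \<union> {i}) \<inter> {..p} = C"
      show False
      proof (cases "i \<le> p")
        case False
        then have "(S \<union> {i}) \<inter> {..p} = (S \<union> {Suc i}) \<inter> {..p}" by auto
        with eq ne show False by simp
      next
        case True
        then have "i \<in> C" "(S \<union> {Suc i}) \<inter> {..p} = insert (Suc i) (C - {i}) \<inter> {..p}"
          using eq S by auto
        with winning_below_p[OF SN(1) win] C_shift_losing i show False by simp
      qed
    qed
    moreover have "v (S \<union> {i})" using canonical[OF i] S win unfolding desirable_def by blast
    ultimately show "reduced_game (S \<union> {i})" using reduced_game_iff[OF SN(2)] by simp
  qed
  ultimately show ?thesis unfolding canonical_wvg_def by blast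
qed

lemma C_exchange_p_winning:
  assumes "i \<in> {1..n}" "i \<le> p" "i \<notin> C"
  shows "v (insert i (C - {p}))"
proof -
  have "u p \<le> u i" using weight_antimono assms C_subset p_in_C by auto
  then have "sum u C \<le> sum u (insert i (C - {p}))"
    using finite_C p_in_C assms(3) by (simp add: sum.remove)
  moreover have "insert i (C - {p}) \<subseteq> {1..n}" using assms C_subset by auto
  ultimately show ?thesis using winning_iff C_winning C_subset by force
qed

lemma min_winning_of_reduced_game:
  assumes "S \<in> min_winning n reduced_game"
  shows "S \<in> min_winning n v"
proof -
  from assms have SN: "S \<subseteq> {1..n}" and red: "reduced_game S"
    and red_loss: "\<And>i. i \<in> S \<Longrightarrow> \<not> reduced_game (S - {i})"
    unfolding min_winning_def by auto
  have "v S" and SC: "S \<inter> {..p} \<noteq> C" using reduced_game_iff[OF SN] red by auto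
  have "\<not> v (S - {i})" if iS: "i \<in> S" for i
  proof
    assume "v (S - {i})"
    moreover have "S - {i} \<subseteq> {1..n}" using SN by blast
    ultimately have eq: "(S - {i}) \<inter> {..p} = C" using red_loss[OF iS] reduced_game_iff by blast
    then have "C \<subseteq> S - {i}" by blast
    with p_in_C have pS: "p \<in> S" "p \<noteq> i" by auto
    have "i \<le> p"
    proof (rule ccontr)
      assume "\<not> i \<le> p"
      then have "S \<inter> {..p} = (S - {i}) \<inter> {..p}" by auto
      with eq SC show False by simp
    qed
    moreover have "i \<notin> C" using \<open>C \<subseteq> S - {i}\<close> by blast
    moreover have "i \<in> {1..n}" using SN iS by blast
    ultimately have "v (insert i (C - {p}))" using C_exchange_p_winning by blast
    moreover have "insert i (C - {p}) \<subseteq> S - {p}" using \<open>C \<subseteq> S - {i}\<close> iS pS by auto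
    moreover have "S - {p} \<subseteq> {1..n}" using SN by blast
    ultimately have "v (S - {p})" using winning_mono by blast
    moreover have "(S - {p}) \<inter> {..p} \<noteq> C" using iS pS \<open>i \<le> p\<close> \<open>i \<notin> C\<close> by blast
    ultimately have "reduced_game (S - {p})" using reduced_game_iff \<open>S - {p} \<subseteq> {1..n}\<close> by blast
    with red_loss pS show False by blast
  qed
  with SN \<open>v S\<close> show ?thesis unfolding min_winning_def by auto
qed

lemma min_winning_reduced_game: "min_winning n reduced_game = min_winning n v - {C}"
proof
  show "min_winning n reduced_game \<subseteq> min_winning n v - {C}"
  proof
    fix S assume S: "S \<in> min_winning n reduced_game"
    then have "S \<in> min_winning n v" by (rule min_winning_of_reduced_game)
    moreover have "S \<inter> {..p} \<noteq> C" using S reduced_game_iff by (auto simp: min_winning_def)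
    ultimately show "S \<in> min_winning n v - {C}" using C_le_p by auto
  qed
next
  show "min_winning n v - {C} \<subseteq> min_winning n reduced_game"
  proof
    fix S assume "S \<in> min_winning n v - {C}"
    then have SN: "S \<subseteq> {1..n}" and "v S" "S \<noteq> C" "S \<inter> {..p} = S"
      and loss: "\<And>i. i \<in> S \<Longrightarrow> \<not> v (S - {i})"
      using min_winning_le_p by (auto simp: min_winning_def)
    then have "reduced_game S" using reduced_game_iff by simp
    moreover have "\<not> reduced_game (S - {i})" if "i \<in> S" for i
      using reduced_game_iff[of "S - {i}"] SN loss[OF that] by auto
    ultimately show "S \<in> min_winning n reduced_game" using SN by (simp add: min_winning_def)
  qed
qed

end

lemma (in sorted_weighted_game) exists_coalition_removal:
  assumes "\<not> v {}" "min_winning n v \<noteq> {}"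
  shows "\<exists>p C \<epsilon>. coalition_removal n v u q p C \<epsilon>"
proof -
  let ?M = "min_winning n v"
  have "?M \<subseteq> Pow {1..n}" by (auto simp: min_winning_def)
  then have finite: "finite ?M" "finite (\<Union>?M)" by (auto intro: finite_subset)
  have "{} \<notin> ?M" using assms(1) by (simp add: min_winning_def)
  with assms(2) have "\<Union>?M \<noteq> {}" by (metis Union_empty_conv equals0I)
  define p where "p = Max (\<Union>?M)"
  have le_p: "\<And>T x. T \<in> ?M \<Longrightarrow> x \<in> T \<Longrightarrow> x \<le> p"
    using finite(2) unfolding p_def by (meson Max_ge UnionI)
  define A where "A = {T \<in> ?M. p \<in> T}"
  have "finite A" "A \<noteq> {}"
    using finite Max_in[OF finite(2) \<open>\<Union>?M \<noteq> {}\<close>] by (auto simp: A_def p_def)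
  define key where "key T = (sum u T, - int (\<Sum>T))" for T
  define C where "C = arg_min_on key A"
  have "C \<in> A" using \<open>finite A\<close> \<open>A \<noteq> {}\<close> unfolding C_def by (rule arg_min_if_finite(1))
  have least: "key C \<le> key T" if "T \<in> A" for T
    using \<open>finite A\<close> \<open>A \<noteq> {}\<close> that unfolding C_def by (rule arg_min_least)
  from \<open>C \<in> A\<close> have "C \<in> ?M" "p \<in> C" by (simp_all add: A_def)
  have "sum u C \<le> sum u T" and "sum u T = sum u C \<Longrightarrow> \<Sum>T \<le> \<Sum>C" if "T \<in> ?M" "p \<in> T" for T
    using least[of T] that by (auto simp: A_def key_def simp del: of_nat_sum)
  moreover obtain \<epsilon> :: real
    where "0 < \<epsilon>" "\<And>S. S \<subseteq> {1..n} \<Longrightarrow> \<not> v S \<Longrightarrow> sum u S + \<epsilon> * n < q"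
    using losing_margin by blast
  ultimately have "coalition_removal n v u q p C \<epsilon>"
    using \<open>C \<in> ?M\<close> \<open>p \<in> C\<close> le_p
    by (intro coalition_removal.intro[OF sorted_weighted_game_axioms] coalition_removal_axioms.intro)
  then show ?thesis by blast
qed

lemma min_winning_all_losing: "min_winning n (\<lambda>_. False) = {}"
  by (simp add: min_winning_def)

lemma canonical_wvg_all_losing: "canonical_wvg n (\<lambda>_. False)"
  unfolding canonical_wvg_def weighted_voting_game_def desirable_def
  by (intro conjI exI[of _ 1] exI[of _ "\<lambda>_. 0"]) auto

theorem lemma4:
  fixes n :: nat and v :: "nat set \<Rightarrow> bool"
  assumes "n \<ge> 1"
    and "canonical_wvg n v"
    and "min_winning n v \<noteq> {}"
  shows "\<exists>C \<in> min_winning n v. \<exists>v' :: nat set \<Rightarrow> bool.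
           canonical_wvg n v' \<and> min_winning n v' = min_winning n v - {C}"
proof -
  obtain u q where game: "sorted_weighted_game n v u q"
    using canonical_wvg_sorted_weights[OF assms(2)] by blast
  show ?thesis
  proof (cases "v {}")
    case True
    then have "min_winning n v = {{}}"
      using sorted_weighted_game.min_winning_if_empty_winning[OF game] by blast
    then show ?thesis
      using canonical_wvg_all_losing[of n] min_winning_all_losing[of n] by (intro bexI[of _ "{}"] exI) auto
  next
    case False
    then obtain p C \<epsilon> where "coalition_removal n v u q p C \<epsilon>"
      using sorted_weighted_game.exists_coalition_removal[OF game _ assms(3)] by blast
    then interpret coalition_removal n v u q p C \<epsilon> .
    show ?thesis
      using C_min_winning reduced_game_canonical min_winning_reduced_game by (intro bexI exI) auto
  qed
qed

end
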